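(* Let $K\ge 2$ and let $L_1,\dots,L_K:\mathbb{R}^m\to\mathbb{R}$ be differentiable loss functions, and set $L_0=\frac1K\sum_{i=1}^K L_i$. Assume that for every $i\in\{0,1,\dots,K\}$ the gradient $\nabla L_i$ is $H$-Lipschitz, i.e. $\|\nabla L_i(x)-\nabla L_i(y)\|\le H\|x-y\|$ for all $x,y\in\mathbb{R}^m$, where $0<H<\infty$, and assume $L_0^*=\inf_{\theta\in\mathbb{R}^m}L_0(\theta)>-\infty$. Fix a step size $\alpha$ with $0<\alpha\le 1/H$ and a constant $c\ge 0$, and let $(\theta_t)_{t\ge 0}$ be generated by the CAGrad algorithm described in the context. Then: (1) If $c\ge 1$, every fixed point of CAGrad (i.e. every $\theta$ at which the CAGrad update direction vanishes) is a Pareto-stationary point of $(L_0,L_1,\dots,L_K)$. (2) If $0\le c<1$, then for every $T\ge 0$, $$\sum_{t=0}^T\|\nabla L_0(\theta_t)\|^2\le \frac{2\,(L_0(\theta_0)-L_0^* )}{\alpha(1-c^2)}.$$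
   Context: CAGrad (Conflict-Averse Gradient descent) algorithm: given an initial $\theta_0\in\mathbb{R}^m$, a constant $c\ge0$ and step size $\alpha>0$, at step $t\ge1$ let $g_0=\frac1K\sum_{i=1}^K\nabla L_i(\theta_{t-1})$ and $\phi=c^2\|g_0\|^2$. Let $\mathcal W=\{w\in\mathbb{R}^K: w_i\ge0,\ \sum_i w_i=1\}$ be the probability simplex, and for $w\in\mathcal W$ let $g_w=\frac1K\sum_{i=1}^K w_i\nabla L_i(\theta_{t-1})$. Let $w$ be a minimizer over $\mathcal W$ of $F(w)=g_w^\top g_0+\sqrt{\phi}\,\|g_w\|$, and update $\theta_t=\theta_{t-1}-\alpha\big(g_0+\frac{\phi^{1/2}}{\|g_w\|}g_w\big)$. (This update direction is the solution $d$ of $\max_{d\in\mathbb{R}^m}\min_{i\in[K]}\langle\nabla L_i(\theta_{t-1}),d\rangle$ subject to $\|d-g_0\|\le c\|g_0\|$.) Pareto-stationarity: for differentiable functions $F_1,\dots,F_N$ on $\mathbb{R}^m$, a point $\theta$ is Pareto-stationary if $\min_{w\in\Delta_N}\|\sum_{j=1}^N w_j\nabla F_j(\theta)\|=0$, where $\Delta_N$ is the probability simplex in $\mathbb{R}^N$. *)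

theory Defs
  imports "HOL-Analysis.Analysis"
begin

definition prob_simplex :: "nat set \<Rightarrow> (nat \<Rightarrow> real) set" where
  "prob_simplex I = {w. (\<forall>i\<in>I. 0 \<le> w i) \<and> sum w I = 1 \<and> (\<forall>i. i \<notin> I \<longrightarrow> w i = 0)}"

definition pareto_stationary :: "nat set \<Rightarrow> (nat \<Rightarrow> 'a::euclidean_space \<Rightarrow> 'a) \<Rightarrow> 'a \<Rightarrow> bool" where
  "pareto_stationary I G x \<longleftrightarrow>
     (INF w\<in>prob_simplex I. norm (\<Sum>j\<in>I. w j *\<^sub>R G j x)) = 0"

text \<open>CAGrad quantities; G i is the gradient of L_i (i = 1..K).\<close>
definition cagrad_g0 :: "nat \<Rightarrow> (nat \<Rightarrow> 'a::euclidean_space \<Rightarrow> 'a) \<Rightarrow> 'a \<Rightarrow> 'a" where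
  "cagrad_g0 K G x = (1 / real K) *\<^sub>R (\<Sum>i=1..K. G i x)"

definition cagrad_gw :: "nat \<Rightarrow> (nat \<Rightarrow> 'a::euclidean_space \<Rightarrow> 'a) \<Rightarrow> (nat \<Rightarrow> real) \<Rightarrow> 'a \<Rightarrow> 'a" where
  "cagrad_gw K G w x = (1 / real K) *\<^sub>R (\<Sum>i=1..K. w i *\<^sub>R G i x)"

definition cagrad_phi :: "nat \<Rightarrow> real \<Rightarrow> (nat \<Rightarrow> 'a::euclidean_space \<Rightarrow> 'a) \<Rightarrow> 'a \<Rightarrow> real" where
  "cagrad_phi K c G x = c\<^sup>2 * (norm (cagrad_g0 K G x))\<^sup>2"

definition cagrad_F :: "nat \<Rightarrow> real \<Rightarrow> (nat \<Rightarrow> 'a::euclidean_space \<Rightarrow> 'a) \<Rightarrow> 'a \<Rightarrow> (nat \<Rightarrow> real) \<Rightarrow> real" where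
  "cagrad_F K c G x w =
     cagrad_gw K G w x \<bullet> cagrad_g0 K G x + sqrt (cagrad_phi K c G x) * norm (cagrad_gw K G w x)"

text \<open>d is a CAGrad update direction at x: built from some minimiser w of F over the simplex.
  (Isabelle convention: division by zero gives 0.)\<close>
definition cagrad_dir :: "nat \<Rightarrow> real \<Rightarrow> (nat \<Rightarrow> 'a::euclidean_space \<Rightarrow> 'a) \<Rightarrow> 'a \<Rightarrow> 'a \<Rightarrow> bool" where
  "cagrad_dir K c G x d \<longleftrightarrow>
     (\<exists>w\<in>prob_simplex {1..K}.
        (\<forall>v\<in>prob_simplex {1..K}. cagrad_F K c G x w \<le> cagrad_F K c G x v) \<and>
        d = cagrad_g0 K G x +
            (sqrt (cagrad_phi K c G x) / norm (cagrad_gw K G w x)) *\<^sub>R cagrad_gw K G w x)"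

definition cagrad_run :: "nat \<Rightarrow> real \<Rightarrow> real \<Rightarrow> (nat \<Rightarrow> 'a::euclidean_space \<Rightarrow> 'a) \<Rightarrow> (nat \<Rightarrow> 'a) \<Rightarrow> bool" where
  "cagrad_run K c \<alpha> G \<theta> \<longleftrightarrow>
     (\<forall>t. \<exists>d. cagrad_dir K c G (\<theta> t) d \<and> \<theta> (Suc t) = \<theta> t - \<alpha> *\<^sub>R d)"

end

theory Submission
  imports Defs
begin

text \<open>By the descent lemma, a step of length \<open>\<alpha> \<le> 1/H\<close> along any direction \<open>d\<close> with
  \<open>\<parallel>d - \<nabla>L\<^sub>0\<parallel> \<le> c \<parallel>\<nabla>L\<^sub>0\<parallel>\<close> lowers \<open>L\<^sub>0\<close> by at least \<open>\<alpha>(1 - c\<^sup>2)/2 \<parallel>\<nabla>L\<^sub>0\<parallel>\<^sup>2\<close>; the CAGrad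
  direction is such a \<open>d\<close>, and telescoping against \<open>inf L\<^sub>0\<close> gives the bound on the gradient norms.
  A vanishing CAGrad direction means \<open>g\<^sub>0 = -\<mu> g\<^sub>w\<close> with \<open>\<mu> \<ge> 0\<close>, so the convex combination
  \<open>(K g\<^sub>0 + \<mu> K g\<^sub>w) / (K + \<mu>)\<close> of the gradients of \<open>L\<^sub>0, \<dots>, L\<^sub>K\<close> vanishes; this holds for
  every \<open>c\<close>, not only for \<open>c \<ge> 1\<close>.\<close>

lemma GDERIV_unique:
  assumes "GDERIV f x :> a" and "GDERIV f x :> b"
  shows "a = b"
proof -
  have "(\<lambda>h. h \<bullet> a) = (\<lambda>h. h \<bullet> b)"
    using has_derivative_unique assms unfolding gderiv_def by blast
  then have "(a - b) \<bullet> (a - b) = 0"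
    by (metis inner_diff_right right_minus_eq)
  then show ?thesis by simp
qed

lemma GDERIV_sum:
  assumes "\<And>i. i \<in> I \<Longrightarrow> GDERIV (f i) x :> g i"
  shows "GDERIV (\<lambda>x. \<Sum>i\<in>I. f i x) x :> (\<Sum>i\<in>I. g i)"
  using assms unfolding gderiv_def inner_sum_right by (rule has_derivative_sum)

lemma GDERIV_cmult:
  assumes "GDERIV f x :> df"
  shows "GDERIV (\<lambda>x. c * f x) x :> c *\<^sub>R df"
  using GDERIV_mult[OF GDERIV_const assms] by simp

lemma descent_lemma:
  fixes f :: "'a::real_inner \<Rightarrow> real"
  assumes grad: "\<And>x. GDERIV f x :> g x"
    and lip: "\<And>x y. norm (g x - g y) \<le> H * norm (x - y)"
  shows "f (x + h) \<le> f x + g x \<bullet> h + H / 2 * (norm h)\<^sup>2"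
proof -
  define \<phi> where "\<phi> s = f (x + s *\<^sub>R h) - s * (g x \<bullet> h) - H / 2 * s\<^sup>2 * (norm h)\<^sup>2" for s :: real
  have "\<phi> 1 \<le> \<phi> 0"
  proof (rule DERIV_nonpos_imp_nonincreasing[of 0 1])
    fix s :: real assume s: "0 \<le> s" "s \<le> 1"
    have "((\<lambda>s. x + s *\<^sub>R h) has_derivative (\<lambda>t. t *\<^sub>R h)) (at s)"
      by (auto intro!: derivative_eq_intros)
    then have "((\<lambda>s. f (x + s *\<^sub>R h)) has_derivative (\<lambda>t. (t *\<^sub>R h) \<bullet> g (x + s *\<^sub>R h))) (at s)"
      using grad unfolding gderiv_def by (rule has_derivative_compose)
    then have "((\<lambda>s. f (x + s *\<^sub>R h)) has_real_derivative g (x + s *\<^sub>R h) \<bullet> h) (at s)"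
      by (simp add: has_field_derivative_def inner_commute mult_commute_abs)
    then have "(\<phi> has_real_derivative g (x + s *\<^sub>R h) \<bullet> h - g x \<bullet> h - H / 2 * (2 * s) * (norm h)\<^sup>2) (at s)"
      unfolding \<phi>_def by (auto intro!: derivative_eq_intros)
    moreover have "g (x + s *\<^sub>R h) \<bullet> h - g x \<bullet> h \<le> H * s * (norm h)\<^sup>2"
    proof -
      have "g (x + s *\<^sub>R h) \<bullet> h - g x \<bullet> h \<le> norm (g (x + s *\<^sub>R h) - g x) * norm h"
        by (metis inner_diff_left norm_cauchy_schwarz)
      also have "\<dots> \<le> H * norm (s *\<^sub>R h) * norm h"
        using lip[of "x + s *\<^sub>R h" x] by (simp add: mult_right_mono)
      finally show ?thesis using s by (simp add: power2_eq_square)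
    qed
    ultimately show "\<exists>y. (\<phi> has_real_derivative y) (at s) \<and> y \<le> 0" by force
  qed simp
  then show ?thesis unfolding \<phi>_def by simp
qed

lemma perturbed_gradient_step_decrease:
  fixes f :: "'a::real_inner \<Rightarrow> real"
  assumes grad: "\<And>x. GDERIV f x :> g x"
    and lip: "\<And>x y. norm (g x - g y) \<le> H * norm (x - y)"
    and close: "norm (d - g x) \<le> c * norm (g x)"
    and "0 < \<alpha>" "H * \<alpha> \<le> 1"
  shows "f (x - \<alpha> *\<^sub>R d) \<le> f x - \<alpha> * (1 - c\<^sup>2) / 2 * (norm (g x))\<^sup>2"
proof -
  have "H / 2 * (norm (\<alpha> *\<^sub>R d))\<^sup>2 = (H * \<alpha>) * (\<alpha> / 2 * (norm d)\<^sup>2)"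
    using \<open>0 < \<alpha>\<close> by (simp add: power2_eq_square)
  also have "\<dots> \<le> \<alpha> / 2 * (norm d)\<^sup>2"
    using mult_right_mono[OF \<open>H * \<alpha> \<le> 1\<close>, of "\<alpha> / 2 * (norm d)\<^sup>2"] \<open>0 < \<alpha>\<close> by simp
  finally have quadratic: "H / 2 * (norm (\<alpha> *\<^sub>R d))\<^sup>2 \<le> \<alpha> / 2 * (norm d)\<^sup>2" .
  have "(norm (d - g x))\<^sup>2 \<le> c\<^sup>2 * (norm (g x))\<^sup>2"
    using power_mono[OF close] by (simp add: power_mult_distrib)
  \<comment> \<open>completing the square: \<open>-g\<bullet>d + \<parallel>d\<parallel>\<^sup>2/2 = (\<parallel>d - g\<parallel>\<^sup>2 - \<parallel>g\<parallel>\<^sup>2)/2\<close>\<close>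
  then have "d \<bullet> d + g x \<bullet> g x \<le> 2 * (d \<bullet> g x) + c\<^sup>2 * (g x \<bullet> g x)"
    by (simp add: power2_norm_eq_inner inner_diff_left inner_diff_right inner_commute)
  then have linear: "g x \<bullet> (- \<alpha> *\<^sub>R d) + \<alpha> / 2 * (norm d)\<^sup>2 \<le> - \<alpha> * (1 - c\<^sup>2) / 2 * (norm (g x))\<^sup>2"
    using mult_left_mono[of _ _ "\<alpha> / 2"] \<open>0 < \<alpha>\<close>
    by (fastforce simp: power2_norm_eq_inner inner_commute algebra_simps)
  show ?thesis
    using descent_lemma[OF grad lip, of x "- \<alpha> *\<^sub>R d"] quadratic linear by simp
qed

lemma sum_bound_of_sufficient_decrease:
  fixes u a :: "nat \<Rightarrow> real"
  assumes decrease: "\<And>t. u (Suc t) \<le> u t - k * a t"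
    and lower: "\<And>t. m \<le> u t" and "0 < k"
  shows "(\<Sum>t=0..T. a t) \<le> (u 0 - m) / k"
proof -
  have "k * (\<Sum>t=0..T. a t) \<le> (\<Sum>t=0..T. u t - u (Suc t))"
    unfolding sum_distrib_left using decrease by (intro sum_mono) (simp add: algebra_simps)
  also have "\<dots> = u 0 - u (Suc T)"
    using sum_telescope[of u T] by (simp add: atLeast0AtMost)
  finally show ?thesis
    using lower[of "Suc T"] \<open>0 < k\<close> by (simp add: pos_le_divide_eq mult.commute)
qed

lemma pareto_stationaryI:
  assumes "w \<in> prob_simplex I" and "(\<Sum>j\<in>I. w j *\<^sub>R G j x) = 0"
  shows "pareto_stationary I G x"
proof -
  let ?N = "\<lambda>w. norm (\<Sum>j\<in>I. w j *\<^sub>R G j x)"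
  have "bdd_below (?N ` prob_simplex I)"
    by (rule bdd_belowI[of _ 0]) auto
  then have "(INF w\<in>prob_simplex I. ?N w) \<le> 0"
    using cINF_lower[of ?N "prob_simplex I" w] assms by simp
  moreover have "(INF w\<in>prob_simplex I. ?N w) \<ge> 0"
    using assms(1) by (intro cINF_greatest) auto
  ultimately show ?thesis unfolding pareto_stationary_def by linarith
qed

lemma cagrad_dir_dist_g0:
  assumes "cagrad_dir K c G x d" and "0 \<le> c"
  shows "norm (d - cagrad_g0 K G x) \<le> c * norm (cagrad_g0 K G x)"
proof -
  obtain w where d: "d = cagrad_g0 K G x +
      (sqrt (cagrad_phi K c G x) / norm (cagrad_gw K G w x)) *\<^sub>R cagrad_gw K G w x"
    using assms(1) unfolding cagrad_dir_def by blast
  have "sqrt (cagrad_phi K c G x) = c * norm (cagrad_g0 K G x)"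
    using assms(2) by (simp add: cagrad_phi_def real_sqrt_mult)
  then show ?thesis
    using d assms(2) by (cases "cagrad_gw K G w x = 0") simp_all
qed

lemma cagrad_dir_zero_imp_pareto_stationary:
  assumes "0 < K" and G0: "G 0 x = cagrad_g0 K G x" and "cagrad_dir K c G x 0"
  shows "pareto_stationary {0..K} G x"
proof -
  let ?g0 = "cagrad_g0 K G x"
  obtain w where w: "w \<in> prob_simplex {1..K}"
    and dir: "0 = ?g0 + (sqrt (cagrad_phi K c G x) / norm (cagrad_gw K G w x)) *\<^sub>R cagrad_gw K G w x"
    using assms(3) unfolding cagrad_dir_def by blast
  define \<mu> where "\<mu> = sqrt (cagrad_phi K c G x) / norm (cagrad_gw K G w x)"
  have "0 \<le> \<mu>"
    by (simp add: \<mu>_def cagrad_phi_def)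
  have zero: "?g0 + \<mu> *\<^sub>R cagrad_gw K G w x = 0"
    using dir by (simp add: \<mu>_def)
  define a where "a = real K / (\<mu> + real K)"
  define b where "b = \<mu> / (\<mu> + real K)"
  define w' where "w' j = (if j = 0 then a else b * w j)" for j
  have "0 \<le> a" "0 \<le> b" "a + b = 1"
    using \<open>0 \<le> \<mu>\<close> \<open>0 < K\<close> by (simp_all add: a_def b_def add_divide_distrib[symmetric])
  have range: "{0..K} = insert 0 {1..K}" by auto
  have "w' \<in> prob_simplex {0..K}"
    using w \<open>0 \<le> a\<close> \<open>0 \<le> b\<close> \<open>a + b = 1\<close>
    by (auto simp: prob_simplex_def range w'_def sum_distrib_left[symmetric])
  moreover have "(\<Sum>j\<in>{0..K}. w' j *\<^sub>R G j x) = 0"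
  proof -
    have "(\<Sum>j\<in>{0..K}. w' j *\<^sub>R G j x) = a *\<^sub>R ?g0 + b *\<^sub>R (\<Sum>j=1..K. w j *\<^sub>R G j x)"
      by (simp add: range G0 w'_def scaleR_sum_right)
    also have "\<dots> = a *\<^sub>R (?g0 + \<mu> *\<^sub>R cagrad_gw K G w x)"
      using \<open>0 < K\<close> by (simp add: cagrad_gw_def a_def b_def algebra_simps)
    finally show ?thesis using zero by simp
  qed
  ultimately show ?thesis by (rule pareto_stationaryI)
qed

theorem theorem1:
  fixes K :: nat and L :: "nat \<Rightarrow> 'a::euclidean_space \<Rightarrow> real"
    and G :: "nat \<Rightarrow> 'a \<Rightarrow> 'a"
    and H \<alpha> c :: real and \<theta> :: "nat \<Rightarrow> 'a"
  assumes K2: "K \<ge> 2"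
    and L0_def: "\<forall>x. L 0 x = (1 / real K) * (\<Sum>i=1..K. L i x)"
    and grad: "\<forall>i\<in>{0..K}. \<forall>x. GDERIV (L i) x :> G i x"
    and Hpos: "0 < H"
    and lip: "\<forall>i\<in>{0..K}. \<forall>x y. norm (G i x - G i y) \<le> H * norm (x - y)"
    and bdd: "bdd_below (range (L 0))"
    and alpha: "0 < \<alpha>" "\<alpha> \<le> 1 / H"
    and c0: "0 \<le> c"
    and run: "cagrad_run K c \<alpha> (\<lambda>i. G i) \<theta>"
  shows "(1 \<le> c \<longrightarrow>
            (\<forall>x. cagrad_dir K c G x 0 \<longrightarrow> pareto_stationary {0..K} G x))
       \<and> (c < 1 \<longrightarrow>
            (\<forall>T::nat. (\<Sum>t=0..T. (norm (G 0 (\<theta> t)))\<^sup>2)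
               \<le> 2 * (L 0 (\<theta> 0) - (INF x. L 0 x)) / (\<alpha> * (1 - c\<^sup>2))))"
proof -
  have G0: "G 0 x = cagrad_g0 K G x" for x
  proof (rule GDERIV_unique)
    show "GDERIV (L 0) x :> G 0 x" using grad by simp
    have "GDERIV (\<lambda>x. 1 / real K * (\<Sum>i=1..K. L i x)) x :> cagrad_g0 K G x"
      unfolding cagrad_g0_def using grad by (intro GDERIV_cmult GDERIV_sum) auto
    moreover have "L 0 = (\<lambda>x. 1 / real K * (\<Sum>i=1..K. L i x))"
      using L0_def by blast
    ultimately show "GDERIV (L 0) x :> cagrad_g0 K G x"
      by simp
  qed
  have decrease: "L 0 (\<theta> (Suc t)) \<le> L 0 (\<theta> t) - \<alpha> * (1 - c\<^sup>2) / 2 * (norm (G 0 (\<theta> t)))\<^sup>2" for t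
  proof -
    obtain d where "cagrad_dir K c G (\<theta> t) d" and step: "\<theta> (Suc t) = \<theta> t - \<alpha> *\<^sub>R d"
      using run unfolding cagrad_run_def by blast
    then have "norm (d - G 0 (\<theta> t)) \<le> c * norm (G 0 (\<theta> t))"
      using cagrad_dir_dist_g0 c0 G0 by metis
    moreover have "H * \<alpha> \<le> 1" using alpha Hpos by (simp add: field_simps)
    ultimately show ?thesis
      unfolding step using grad lip alpha by (intro perturbed_gradient_step_decrease) auto
  qed
  have "(\<Sum>t=0..T. (norm (G 0 (\<theta> t)))\<^sup>2) \<le> (L 0 (\<theta> 0) - (INF x. L 0 x)) / (\<alpha> * (1 - c\<^sup>2) / 2)"
    if "c < 1" for T
  proof (rule sum_bound_of_sufficient_decrease[where u = "\<lambda>t. L 0 (\<theta> t)", OF decrease])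
    show "(INF x. L 0 x) \<le> L 0 (\<theta> t)" for t using bdd by (simp add: cINF_lower)
    show "0 < \<alpha> * (1 - c\<^sup>2) / 2" using alpha c0 \<open>c < 1\<close> by (simp add: power_less_one_iff)
  qed
  then show ?thesis
    using cagrad_dir_zero_imp_pareto_stationary[OF _ G0] K2 by (simp add: algebra_simps)
qed

end
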